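(* Let $g:\{0,1\}^n\to\{0,1\}^{n+1}$ be a super-bit, and define $f(x)=g(x)[1\ldots n]$ and $b(x)=g(x)[n+1]$ (so $g(x)=f(x)b(x)$). Then $b$ is a super-core of $f$, and $f$ is computable by polynomial-size circuits.
   Context: $U_k$ is uniform on $\{0,1\}^k$. A generator $g:\{0,1\}^n\to\{0,1\}^{n+1}$ computable by polynomial-size circuits is a super-bit if for every nondeterministic polynomial-size circuit family $D$ (accepting iff some witness gives output 1), every polynomial $p$ and all sufficiently large $n$, $\Pr[D(U_{n+1})=1]-\Pr[D(g(U_n))=1]<1/p(n)$. A predicate $b$ computable by polynomial-size circuits is a super-core of $f:\{0,1\}^n\to\{0,1\}^{m(n)}$ if there do not exist a nondeterministic polynomial-size circuit family $\mathcal{A}_1$, a co-nondeterministic polynomial-size circuit family $\mathcal{A}_2$ (rejecting iff some witness gives output 0), a polynomial $p$ and infinitely many $n$ such that either $\Pr_{x\in\{0,1\}^n}[\mathcal{A}_1(f(x),1^n)=b(x)=0]+\tfrac12\Pr_{y\in\{0,1\}^{m(n)}}[\mathcal{A}_1(y,1^n)=1]\ge \tfrac12+\tfrac1{p(n)}$ or $\Pr_{x}[\mathcal{A}_2(f(x),1^n)=b(x)=1]+\tfrac12\Pr_{y}[\mathcal{A}_2(y,1^n)=0]\ge \tfrac12+\tfrac1{p(n)}$. *)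

theory Defs
  imports Complex_Main "HOL-Computational_Algebra.Polynomial"
begin

text \<open>Wires 0..k-1 are the k input bits; the i-th gate produces wire k+i and may only
  read earlier wires (reading a nonexistent wire yields False).\<close>

datatype gate = GConst bool | GNot nat | GAnd nat nat | GOr nat nat

record circuit =
  gates :: "gate list"
  outs  :: "nat list"

definition wire :: "bool list \<Rightarrow> nat \<Rightarrow> bool" where
  "wire ws i = (if i < length ws then ws ! i else False)"

fun eval_gate :: "bool list \<Rightarrow> gate \<Rightarrow> bool" where
  "eval_gate ws (GConst c) = c"
| "eval_gate ws (GNot i) = (\<not> wire ws i)"
| "eval_gate ws (GAnd i j) = (wire ws i \<and> wire ws j)"
| "eval_gate ws (GOr i j) = (wire ws i \<or> wire ws j)"

definition eval_circuit :: "circuit \<Rightarrow> bool list \<Rightarrow> bool list" where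
  "eval_circuit C x =
     (let ws = foldl (\<lambda>ws g. ws @ [eval_gate ws g]) x (gates C)
      in map (wire ws) (outs C))"

definition csize :: "circuit \<Rightarrow> nat" where
  "csize C = length (gates C)"

definition out1 :: "circuit \<Rightarrow> bool list \<Rightarrow> bool" where
  "out1 C x = (case eval_circuit C x of [] \<Rightarrow> False | b # _ \<Rightarrow> b)"

definition poly_size :: "(nat \<Rightarrow> circuit) \<Rightarrow> bool" where
  "poly_size C = (\<exists>q :: nat poly. \<forall>k. csize (C k) \<le> poly q k)"

definition poly_computable :: "(bool list \<Rightarrow> bool list) \<Rightarrow> bool" where
  "poly_computable h = (\<exists>C. poly_size C \<and> (\<forall>x. eval_circuit (C (length x)) x = h x))"

definition poly_computable_pred :: "(bool list \<Rightarrow> bool) \<Rightarrow> bool" where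
  "poly_computable_pred b = poly_computable (\<lambda>x. [b x])"

text \<open>A nondeterministic circuit family: for input length k, a witness length and a
  circuit reading input followed by witness. Polynomial size bounds witness length plus gates.\<close>
type_synonym nd_family = "nat \<Rightarrow> nat \<times> circuit"

definition nd_poly_size :: "nd_family \<Rightarrow> bool" where
  "nd_poly_size D = (\<exists>q :: nat poly. \<forall>k. fst (D k) + csize (snd (D k)) \<le> poly q k)"

definition nd_accepts :: "nd_family \<Rightarrow> bool list \<Rightarrow> bool" where
  "nd_accepts D x = (\<exists>w. length w = fst (D (length x)) \<and> out1 (snd (D (length x))) (x @ w))"

definition cond_accepts :: "nd_family \<Rightarrow> bool list \<Rightarrow> bool" where
  "cond_accepts D x = (\<forall>w. length w = fst (D (length x)) \<longrightarrow> out1 (snd (D (length x))) (x @ w))"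

definition prob_unif :: "nat \<Rightarrow> (bool list \<Rightarrow> bool) \<Rightarrow> real" where
  "prob_unif k P = real (card {x. length x = k \<and> P x}) / 2 ^ k"

definition super_bit :: "(bool list \<Rightarrow> bool list) \<Rightarrow> bool" where
  "super_bit g \<longleftrightarrow>
     (\<forall>x. length (g x) = Suc (length x)) \<and> poly_computable g \<and>
     (\<forall>D. nd_poly_size D \<longrightarrow>
        (\<forall>p :: nat poly. p \<noteq> 0 \<longrightarrow>
           (\<forall>\<^sub>F n in sequentially.
              prob_unif (Suc n) (nd_accepts D) - prob_unif n (\<lambda>x. nd_accepts D (g x))
                < 1 / real (poly p n))))"

text \<open>b is a super-core of f : {0,1}^n -> {0,1}^(m n). The input (y, 1^n) is encoded
  as the string y followed by n ones; families are indexed by total input length.\<close>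
definition super_core ::
  "(bool list \<Rightarrow> bool) \<Rightarrow> (bool list \<Rightarrow> bool list) \<Rightarrow> (nat \<Rightarrow> nat) \<Rightarrow> bool" where
  "super_core b f m \<longleftrightarrow> poly_computable_pred b \<and>
     \<not> (\<exists>A1 A2 (p :: nat poly). nd_poly_size A1 \<and> nd_poly_size A2 \<and> p \<noteq> 0 \<and>
          (\<exists>\<^sub>F n in sequentially.
             prob_unif n (\<lambda>x. \<not> nd_accepts A1 (f x @ replicate n True) \<and> \<not> b x)
               + 1/2 * prob_unif (m n) (\<lambda>y. nd_accepts A1 (y @ replicate n True))
               \<ge> 1/2 + 1 / real (poly p n)
           \<or> prob_unif n (\<lambda>x. cond_accepts A2 (f x @ replicate n True) \<and> b x)
               + 1/2 * prob_unif (m n) (\<lambda>y. \<not> cond_accepts A2 (y @ replicate n True))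
               \<ge> 1/2 + 1 / real (poly p n)))"

end

theory Submission
  imports Defs
begin

text \<open>A nondeterministic \<open>A\<^sub>1\<close> that breaks the first
  super-core condition yields the nondeterministic test \<open>D (y @ [c]) = A\<^sub>1 (y @ 1\<^sup>n) \<or> c\<close>;
  on a uniform input it accepts with probability \<open>1/2 + 1/2 Pr[A\<^sub>1 (U\<^sub>n @ 1\<^sup>n)]\<close>, on
  \<open>g (U\<^sub>n)\<close> with probability \<open>1 - Pr[\<not> A\<^sub>1 (f x @ 1\<^sup>n) \<and> \<not> b x]\<close>, so its advantage is exactly
  the first super-core expression minus \<open>1/2\<close>. A co-nondeterministic \<open>A\<^sub>2\<close> is handled
  by the nondeterministic test \<open>D (y @ [c]) = \<not> A\<^sub>2 (y @ 1\<^sup>n) \<or> \<not> c\<close>. Both tests are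
  polynomial-size circuits, so the super-bit property forbids the advantage.
  Computability of \<open>f\<close> and \<open>b\<close> comes from discarding output wires of a circuit for \<open>g\<close>.\<close>

definition run :: "gate list \<Rightarrow> bool list \<Rightarrow> bool list" where
  "run gs ws = foldl (\<lambda>ws g. ws @ [eval_gate ws g]) ws gs"

lemma run_Nil [simp]: "run [] ws = ws"
  by (simp add: run_def)

lemma run_Cons [simp]: "run (g # gs) ws = run gs (ws @ [eval_gate ws g])"
  by (simp add: run_def)

lemma run_append: "run (gs @ hs) ws = run hs (run gs ws)"
  by (simp add: run_def)

lemma length_run [simp]: "length (run gs ws) = length ws + length gs"
  by (induction gs arbitrary: ws) auto

lemma eval_circuit_run: "eval_circuit C x = map (wire (run (gates C) x)) (outs C)"
  by (simp add: eval_circuit_def run_def)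

lemma wire_append_left: "i < length ws \<Longrightarrow> wire (ws @ vs) i = wire ws i"
  by (simp add: wire_def nth_append)

lemma wire_append_shift: "wire (pre @ ws) (i + length pre) = wire ws i"
  by (simp add: wire_def nth_append)

fun shift_gate :: "nat \<Rightarrow> gate \<Rightarrow> gate" where
  "shift_gate k (GConst c) = GConst c"
| "shift_gate k (GNot i) = GNot (i + k)"
| "shift_gate k (GAnd i j) = GAnd (i + k) (j + k)"
| "shift_gate k (GOr i j) = GOr (i + k) (j + k)"

lemma eval_shift_gate: "eval_gate (pre @ ws) (shift_gate (length pre) g) = eval_gate ws g"
  by (cases g) (simp_all add: wire_append_shift)

lemma run_shift_gates: "run (map (shift_gate (length pre)) gs) (pre @ ws) = pre @ run gs ws"
proof (induction gs arbitrary: ws)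
  case (Cons g gs)
  show ?case
    using Cons.IH[of "ws @ [eval_gate ws g]"] eval_shift_gate[of pre ws g] by simp
qed simp

definition copy_gates :: "nat list \<Rightarrow> gate list" where
  "copy_gates js = map (\<lambda>i. GAnd i i) js"

lemma run_copy_gates:
  "\<forall>i\<in>set js. i < length ws \<Longrightarrow> run (copy_gates js) ws = ws @ map (wire ws) js"
proof (induction js arbitrary: ws)
  case (Cons i js)
  have "map (wire (ws @ [wire ws i])) js = map (wire ws) js"
    using Cons.prems by (simp add: wire_append_left)
  moreover have "run (copy_gates js) (ws @ [wire ws i])
      = (ws @ [wire ws i]) @ map (wire (ws @ [wire ws i])) js"
    using Cons by (intro Cons.IH) auto
  ultimately show ?case by (simp add: copy_gates_def)
qed (simp add: copy_gates_def)

lemma run_replicate_const: "run (replicate m (GConst c)) ws = ws @ replicate m c"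
  by (induction m arbitrary: ws) auto

lemma map_wire_upt: "map (wire (xs @ ys @ zs)) [length xs..<length xs + length ys] = ys"
  by (rule nth_equalityI) (simp_all add: wire_def nth_append)

subsection \<open>Padding the input \<open>y @ c # w\<close> to \<open>y @ 1\<^sup>n @ w\<close>\<close>

definition pad_gates :: "nat \<Rightarrow> nat \<Rightarrow> gate list" where
  "pad_gates n wl = copy_gates [0..<n] @ replicate n (GConst True) @ copy_gates [Suc n..<Suc n + wl]"

lemma length_pad_gates [simp]: "length (pad_gates n wl) = n + n + wl"
  by (simp add: pad_gates_def copy_gates_def)

lemma run_pad_gates:
  assumes "length y = n" "length w = wl"
  shows "run (pad_gates n wl) (y @ c # w) = (y @ c # w) @ y @ replicate n True @ w"
proof -
  let ?x = "y @ c # w"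
  have "map (wire ?x) [0..<n] = y"
    using map_wire_upt[of "[]" y "c # w"] assms by simp
  then have copy_y: "run (copy_gates [0..<n]) ?x = ?x @ y"
    using run_copy_gates[of "[0..<n]" ?x] assms by simp
  have "map (wire ((y @ [c]) @ w @ y @ replicate n True)) [Suc n..<Suc n + wl] = w"
    using map_wire_upt[of "y @ [c]" w "y @ replicate n True"] assms by (simp del: upt_Suc)
  then have copy_w: "run (copy_gates [Suc n..<Suc n + wl]) (?x @ y @ replicate n True)
      = (?x @ y @ replicate n True) @ w"
    using run_copy_gates[of "[Suc n..<Suc n + wl]" "?x @ y @ replicate n True"] assms
    by (simp del: upt_Suc)
  show ?thesis
    using copy_w by (simp add: pad_gates_def run_append copy_y run_replicate_const del: upt_Suc)
qed

text \<open>Index of the wire that \<open>out1\<close> reads, for an input of length \<open>L\<close>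
  (an out-of-range index when there are no outputs, which reads \<open>False\<close>).\<close>

definition out1_wire :: "circuit \<Rightarrow> nat \<Rightarrow> nat" where
  "out1_wire C L = (case outs C of [] \<Rightarrow> L + length (gates C) | k # _ \<Rightarrow> k)"

lemma out1_run_wire: "out1 C z = wire (run (gates C) z) (out1_wire C (length z))"
  by (auto simp: out1_def eval_circuit_run out1_wire_def wire_def split: list.split)

definition padded_gates :: "nat \<Rightarrow> nat \<Rightarrow> circuit \<Rightarrow> gate list" where
  "padded_gates n wl C = pad_gates n wl @ map (shift_gate (Suc n + wl)) (gates C)"

definition padded_out :: "nat \<Rightarrow> nat \<Rightarrow> circuit \<Rightarrow> nat" where
  "padded_out n wl C = out1_wire C (n + n + wl) + (Suc n + wl)"

lemma wires_padded_gates: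
  fixes C :: circuit and c :: bool
  assumes "length y = n" "length w = wl"
  defines "ws \<equiv> run (padded_gates n wl C) (y @ c # w)"
  shows "wire ws (padded_out n wl C) = out1 C (y @ replicate n True @ w)"
    and "wire ws n = c"
proof -
  have len: "length (y @ c # w) = Suc n + wl" using assms by simp
  have ws: "ws = (y @ c # w) @ run (gates C) (y @ replicate n True @ w)"
    unfolding ws_def padded_gates_def run_append run_pad_gates[OF assms(1,2)]
    using run_shift_gates[of "y @ c # w"] len by simp
  show "wire ws (padded_out n wl C) = out1 C (y @ replicate n True @ w)"
    unfolding ws padded_out_def wire_append_shift[of "y @ c # w", unfolded len]
      out1_run_wire[of C "y @ replicate n True @ w"]
    using assms by (simp add: add.assoc)
  show "wire ws n = c"
    unfolding ws using assms by (simp add: wire_def nth_append)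
qed

lemma length_padded_gates [simp]: "length (padded_gates n wl C) = n + n + wl + length (gates C)"
  by (simp add: padded_gates_def)

definition or_last_circuit :: "nat \<Rightarrow> nat \<Rightarrow> circuit \<Rightarrow> circuit" where
  "or_last_circuit n wl C =
     \<lparr>gates = padded_gates n wl C @ [GOr (padded_out n wl C) n],
      outs = [Suc n + wl + length (padded_gates n wl C)]\<rparr>"

definition nand_last_circuit :: "nat \<Rightarrow> nat \<Rightarrow> circuit \<Rightarrow> circuit" where
  "nand_last_circuit n wl C =
     \<lparr>gates = padded_gates n wl C @
        [GAnd (padded_out n wl C) n, GNot (Suc n + wl + length (padded_gates n wl C))],
      outs = [Suc (Suc n + wl + length (padded_gates n wl C))]\<rparr>"

lemma out1_or_last_circuit:
  assumes "length y = n" "length w = wl"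
  shows "out1 (or_last_circuit n wl C) (y @ c # w) \<longleftrightarrow> out1 C (y @ replicate n True @ w) \<or> c"
  using wires_padded_gates[OF assms, of C c] assms
  by (simp add: out1_def eval_circuit_run or_last_circuit_def run_append wire_def nth_append)

lemma out1_nand_last_circuit:
  assumes "length y = n" "length w = wl"
  shows "out1 (nand_last_circuit n wl C) (y @ c # w) \<longleftrightarrow> \<not> (out1 C (y @ replicate n True @ w) \<and> c)"
  using wires_padded_gates[OF assms, of C c] assms
  by (simp add: out1_def eval_circuit_run nand_last_circuit_def run_append wire_def nth_append)

subsection \<open>The distinguishing families\<close>

text \<open>On inputs \<open>y @ [c]\<close> of length \<open>n + 1\<close> the family runs \<open>B\<close> around the circuit
  of \<open>A\<close> for inputs of length \<open>2 n\<close>, keeping the witness length of \<open>A\<close>.\<close>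

definition padded_family :: "(nat \<Rightarrow> nat \<Rightarrow> circuit \<Rightarrow> circuit) \<Rightarrow> nd_family \<Rightarrow> nd_family" where
  "padded_family B A k = (case k of
       0 \<Rightarrow> (0, \<lparr>gates = [], outs = []\<rparr>)
     | Suc n \<Rightarrow> (fst (A (2 * n)), B n (fst (A (2 * n))) (snd (A (2 * n)))))"

lemma poly_mono_nat: "(x :: nat) \<le> y \<Longrightarrow> poly (p :: nat poly) x \<le> poly p y"
  by (induction p) (auto intro!: add_mono mult_mono)

lemma nd_poly_size_padded_family:
  assumes A: "nd_poly_size A"
    and B: "\<And>n wl C. csize (B n wl C) \<le> csize C + 2 * n + wl + 2"
  shows "nd_poly_size (padded_family B A)"
proof -
  obtain q :: "nat poly" where q: "\<And>k. fst (A k) + csize (snd (A k)) \<le> poly q k"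
    using A unfolding nd_poly_size_def by blast
  define Q :: "nat poly" where "Q = smult 2 (pcompose q [:0, 2:]) + [:2, 2:]"
  have "fst (padded_family B A k) + csize (snd (padded_family B A k)) \<le> poly Q k" for k
  proof (cases k)
    case (Suc n)
    have "poly q (2 * n) \<le> poly q (2 * k)"
      using Suc by (intro poly_mono_nat) simp
    moreover have "poly Q k = 2 * poly q (2 * k) + 2 + 2 * k"
      by (simp add: Q_def poly_pcompose algebra_simps) (simp add: mult_2_right)
    ultimately show ?thesis
      using Suc B[of n "fst (A (2 * n))" "snd (A (2 * n))"] q[of "2 * n"]
      by (simp add: padded_family_def)
  qed (simp add: padded_family_def csize_def)
  then show ?thesis unfolding nd_poly_size_def by blast
qed

lemma nd_accepts_padded_family:
  assumes "\<And>wl C w. length w = wl \<Longrightarrow>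
      out1 (B (length y) wl C) (y @ c # w) \<longleftrightarrow> \<Phi> (out1 C (y @ replicate (length y) True @ w))"
  shows "nd_accepts (padded_family B A) (y @ [c]) \<longleftrightarrow> (\<exists>w. length w = fst (A (2 * length y))
      \<and> \<Phi> (out1 (snd (A (2 * length y))) (y @ replicate (length y) True @ w)))"
  using assms by (auto simp: nd_accepts_def padded_family_def)

lemma nd_accepts_or_last_family:
  "nd_accepts (padded_family or_last_circuit A) (y @ [c])
     \<longleftrightarrow> nd_accepts A (y @ replicate (length y) True) \<or> c"
  by (subst nd_accepts_padded_family[where \<Phi> = "\<lambda>a. a \<or> c"])
    (auto simp: out1_or_last_circuit nd_accepts_def mult_2 intro: exI[of _ "replicate _ False"])

lemma nd_accepts_nand_last_family:
  "nd_accepts (padded_family nand_last_circuit A) (y @ [c])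
     \<longleftrightarrow> \<not> cond_accepts A (y @ replicate (length y) True) \<or> \<not> c"
  by (subst nd_accepts_padded_family[where \<Phi> = "\<lambda>a. \<not> (a \<and> c)"])
    (auto simp: out1_nand_last_circuit cond_accepts_def mult_2 intro: exI[of _ "replicate _ False"])

lemma nd_poly_size_or_last_family: "nd_poly_size A \<Longrightarrow> nd_poly_size (padded_family or_last_circuit A)"
  by (rule nd_poly_size_padded_family) (simp_all add: csize_def or_last_circuit_def)

lemma nd_poly_size_nand_last_family: "nd_poly_size A \<Longrightarrow> nd_poly_size (padded_family nand_last_circuit A)"
  by (rule nd_poly_size_padded_family) (simp_all add: csize_def nand_last_circuit_def)

lemma prob_unif_cong:
  "(\<And>x. length x = n \<Longrightarrow> P x \<longleftrightarrow> Q x) \<Longrightarrow> prob_unif n P = prob_unif n Q"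
  unfolding prob_unif_def by (metis (mono_tags, lifting) Collect_cong)

lemma card_lists_length_bool: "card {x :: bool list. length x = n} = 2 ^ n"
  using card_lists_length_eq[of "UNIV :: bool set" n] by simp

lemma finite_lists_length_bool: "finite {x :: bool list. length x = n \<and> P x}"
  by (rule finite_subset[OF _ finite_lists_length_eq[of "UNIV :: bool set" n]]) auto

lemma prob_unif_True: "prob_unif n (\<lambda>_. True) = 1"
  by (simp add: prob_unif_def card_lists_length_bool)

lemma prob_unif_not: "prob_unif n (\<lambda>x. \<not> P x) = 1 - prob_unif n P"
proof -
  have "{x :: bool list. length x = n} = {x. length x = n \<and> P x} \<union> {x. length x = n \<and> \<not> P x}"
    by auto
  then have "card {x :: bool list. length x = n \<and> P x} + card {x. length x = n \<and> \<not> P x} = 2 ^ n"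
    by (simp add: card_Un_disjoint finite_lists_length_bool disjoint_iff flip: card_lists_length_bool)
  then have "real (card {x :: bool list. length x = n \<and> P x}) + card {x. length x = n \<and> \<not> P x} = 2 ^ n"
    by (metis of_nat_add of_nat_numeral of_nat_power)
  then show ?thesis
    unfolding prob_unif_def by (simp add: field_simps)
qed

lemma prob_unif_snoc:
  "prob_unif (Suc n) P = (prob_unif n (\<lambda>y. P (y @ [True])) + prob_unif n (\<lambda>y. P (y @ [False]))) / 2"
proof -
  let ?S = "\<lambda>c. {y :: bool list. length y = n \<and> P (y @ [c])}"
  have "{z. length z = Suc n \<and> P z} = (\<lambda>y. y @ [True]) ` ?S True \<union> (\<lambda>y. y @ [False]) ` ?S False"
  proof (intro set_eqI iffI)
    fix z :: "bool list"
    assume "z \<in> {z. length z = Suc n \<and> P z}"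
    then obtain y c where "z = y @ [c]" "length y = n" "P z"
      by (metis (mono_tags) length_Suc_conv_rev mem_Collect_eq rev_eq_Cons_iff)
    then show "z \<in> (\<lambda>y. y @ [True]) ` ?S True \<union> (\<lambda>y. y @ [False]) ` ?S False"
      by (cases c) auto
  qed auto
  then have "card {z. length z = Suc n \<and> P z}
      = card ((\<lambda>y. y @ [True]) ` ?S True) + card ((\<lambda>y. y @ [False]) ` ?S False)"
    by (simp only:) (rule card_Un_disjoint, auto simp: finite_lists_length_bool)
  also have "\<dots> = card (?S True) + card (?S False)"
    by (simp add: card_image inj_on_def)
  finally show ?thesis
    unfolding prob_unif_def by (simp add: field_simps)
qed

lemma distinguishing_advantage:
  assumes D: "\<And>y c. length y = n \<Longrightarrow> D (y @ [c]) \<longleftrightarrow> Q y \<or> c = c\<^sub>0"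
    and f: "\<And>x. length x = n \<Longrightarrow> length (f x) = n"
  shows "prob_unif (Suc n) D - prob_unif n (\<lambda>x. D (f x @ [b x]))
       = prob_unif n (\<lambda>x. \<not> Q (f x) \<and> b x \<noteq> c\<^sub>0) + 1/2 * prob_unif n Q - 1/2"
proof -
  have "prob_unif n (\<lambda>y. D (y @ [c\<^sub>0])) = prob_unif n (\<lambda>_. True)"
    and "prob_unif n (\<lambda>y. D (y @ [\<not> c\<^sub>0])) = prob_unif n Q"
    by (simp_all add: D cong: prob_unif_cong)
  then have uniform: "prob_unif (Suc n) D = 1/2 + 1/2 * prob_unif n Q"
    by (cases c\<^sub>0) (simp_all add: prob_unif_snoc prob_unif_True)
  have "prob_unif n (\<lambda>x. D (f x @ [b x])) = prob_unif n (\<lambda>x. \<not> (\<not> Q (f x) \<and> b x \<noteq> c\<^sub>0))"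
    using D f by (intro prob_unif_cong) auto
  then have pseudo: "prob_unif n (\<lambda>x. D (f x @ [b x])) = 1 - prob_unif n (\<lambda>x. \<not> Q (f x) \<and> b x \<noteq> c\<^sub>0)"
    by (simp only: prob_unif_not)
  show ?thesis
    unfolding uniform pseudo by simp
qed

lemma poly_computable_take:
  assumes "poly_computable h"
  shows "poly_computable (\<lambda>x. take (k (length x)) (h x))"
proof -
  obtain C where size: "poly_size C" and eval: "\<And>x. eval_circuit (C (length x)) x = h x"
    using assms unfolding poly_computable_def by blast
  define C' where "C' m = \<lparr>gates = gates (C m), outs = take (k m) (outs (C m))\<rparr>" for m
  have "poly_size C'"
    using size by (simp add: poly_size_def C'_def csize_def)
  moreover have "eval_circuit (C' (length x)) x = take (k (length x)) (h x)" for x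
    using eval[of x] by (simp add: eval_circuit_run C'_def) (metis take_map)
  ultimately show ?thesis
    unfolding poly_computable_def by blast
qed

lemma poly_computable_pred_nth:
  assumes "poly_computable h" and "\<And>x. k (length x) < length (h x)"
  shows "poly_computable_pred (\<lambda>x. h x ! k (length x))"
proof -
  obtain C where size: "poly_size C" and eval: "\<And>x. eval_circuit (C (length x)) x = h x"
    using assms(1) unfolding poly_computable_def by blast
  define C' where "C' m = \<lparr>gates = gates (C m), outs = [outs (C m) ! k m]\<rparr>" for m
  have "poly_size C'"
    using size by (simp add: poly_size_def C'_def csize_def)
  moreover have "eval_circuit (C' (length x)) x = [h x ! k (length x)]" for x
    using eval[of x] assms(2)[of x] by (simp add: eval_circuit_run C'_def) (metis length_map nth_map)
  ultimately show ?thesis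
    unfolding poly_computable_pred_def poly_computable_def by blast
qed

lemma super_bit_split:
  assumes "super_bit g"
  shows "g x = take (length x) (g x) @ [g x ! length x]"
proof -
  have "length (g x) = Suc (length x)"
    using assms unfolding super_bit_def by blast
  then show ?thesis
    by (metis lessI order_refl take_Suc_conv_app_nth take_all)
qed

lemma super_bit_advantage:
  assumes g: "super_bit g" and D: "nd_poly_size D" and p: "p \<noteq> 0"
    and accepts: "\<And>y c. nd_accepts D (y @ [c]) \<longleftrightarrow> Q (length y) y \<or> c = c\<^sub>0"
  shows "\<forall>\<^sub>F n in sequentially.
    prob_unif n (\<lambda>x. \<not> Q n (take (length x) (g x)) \<and> g x ! length x \<noteq> c\<^sub>0)
      + 1/2 * prob_unif n (Q n) < 1/2 + 1 / real (poly p n)"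
proof -
  have "\<forall>\<^sub>F n in sequentially.
      prob_unif (Suc n) (nd_accepts D) - prob_unif n (\<lambda>x. nd_accepts D (g x)) < 1 / real (poly p n)"
    using g D p unfolding super_bit_def by blast
  moreover have "prob_unif (Suc n) (nd_accepts D) - prob_unif n (\<lambda>x. nd_accepts D (g x))
      = prob_unif n (\<lambda>x. \<not> Q n (take (length x) (g x)) \<and> g x ! length x \<noteq> c\<^sub>0)
        + 1/2 * prob_unif n (Q n) - 1/2" for n
    using distinguishing_advantage[of n "nd_accepts D" "Q n" c\<^sub>0 "\<lambda>x. take (length x) (g x)"
        "\<lambda>x. g x ! length x"] accepts g
    by (simp add: super_bit_def flip: super_bit_split[OF g])
  ultimately show ?thesis
    by (simp add: algebra_simps)
qed

theorem proposition6p4: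
  fixes g :: "bool list \<Rightarrow> bool list"
  assumes "super_bit g"
  shows "super_core (\<lambda>x. g x ! length x) (\<lambda>x. take (length x) (g x)) (\<lambda>n. n)
       \<and> poly_computable (\<lambda>x. take (length x) (g x))"
proof -
  have len: "length x < length (g x)" and computable: "poly_computable g" for x
    using assms unfolding super_bit_def by auto
  have nd_fails: "\<forall>\<^sub>F n in sequentially. \<not> (
      prob_unif n (\<lambda>x. \<not> nd_accepts A (take (length x) (g x) @ replicate n True) \<and> \<not> g x ! length x)
        + 1/2 * prob_unif n (\<lambda>y. nd_accepts A (y @ replicate n True))
      \<ge> 1/2 + 1 / real (poly p n))"
    if "nd_poly_size A" "p \<noteq> 0" for A and p :: "nat poly"
    using super_bit_advantage[OF assms nd_poly_size_or_last_family[OF that(1)] that(2),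
        where Q = "\<lambda>n y. nd_accepts A (y @ replicate n True)" and c\<^sub>0 = True]
    by (simp add: nd_accepts_or_last_family not_le)
  have cond_fails: "\<forall>\<^sub>F n in sequentially. \<not> (
      prob_unif n (\<lambda>x. cond_accepts A (take (length x) (g x) @ replicate n True) \<and> g x ! length x)
        + 1/2 * prob_unif n (\<lambda>y. \<not> cond_accepts A (y @ replicate n True))
      \<ge> 1/2 + 1 / real (poly p n))"
    if "nd_poly_size A" "p \<noteq> 0" for A and p :: "nat poly"
    using super_bit_advantage[OF assms nd_poly_size_nand_last_family[OF that(1)] that(2),
        where Q = "\<lambda>n y. \<not> cond_accepts A (y @ replicate n True)" and c\<^sub>0 = False]
    by (simp add: nd_accepts_nand_last_family not_le)
  have "poly_computable_pred (\<lambda>x. g x ! length x)"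
    using poly_computable_pred_nth[OF computable, of "\<lambda>n. n"] len by simp
  with nd_fails cond_fails show ?thesis
    by (auto simp: super_core_def not_frequently de_Morgan_disj eventually_conj_iff
        intro: poly_computable_take[OF computable])
qed

end
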